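(* Let $X$ be a real-valued random variable with $\mathbb{E}X^{2} < \infty$, let $\rho\ge0$ and $g \in \mathcal{V}_{\rho}$. Then for all $s > 0$, \[ \limsup_{n \to \infty} \frac{\log \left(n \mathbb{P}\left(X > s \sqrt{n g(\log n)} \right) \right)}{g(\log n)} = - \frac{\overline{\lambda}_{1}}{2^{\rho}},\qquad \liminf_{n \to \infty} \frac{\log \left(n \mathbb{P}\left(X > s \sqrt{n g(\log n)} \right) \right)}{g(\log n)} = - \frac{\underline{\lambda}_{1}}{2^{\rho}}, \] and \[ \limsup_{n \to \infty} \frac{\log \left(n \mathbb{P}\left(X > \frac{s \sqrt{n}}{g(\log n)} \right) \right)}{g(\log n)} = - \frac{\overline{\lambda}_{1}}{2^{\rho}},\qquad \liminf_{n \to \infty} \frac{\log \left(n \mathbb{P}\left(X > \frac{s \sqrt{n}}{g(\log n)} \right) \right)}{g(\log n)} = - \frac{\underline{\lambda}_{1}}{2^{\rho}}. \]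
   Context: For $\rho\ge 0$, $\mathcal{V}_{\rho}$ denotes the set of all nondecreasing functions $g:[0,\infty)\to[0,\infty)$ regularly varying at infinity with index $\rho$ (i.e. $\lim_{t\to\infty} g(xt)/g(t)=x^\rho$ for all $x>0$) with $\lim_{t\to\infty}g(t)=\infty$. $\log$ is the natural logarithm, $\log 0=-\infty$. $\overline{\lambda}_{1} = - \limsup_{t \to \infty} \frac{\log (t^{2} \mathbb{P}(X > t ))}{g(\log t)}$ and $\underline{\lambda}_{1} = - \liminf_{t \to \infty} \frac{\log (t^{2} \mathbb{P}(X > t ))}{g(\log t)}$, with values in $[0,\infty]$. *)

theory Defs
  imports "HOL-Probability.Probability"
begin

definition elog :: "real \<Rightarrow> ereal" where
  "elog x = (if x > 0 then ereal (ln x) else -\<infinity>)"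

definition regvar_class :: "real \<Rightarrow> (real \<Rightarrow> real) \<Rightarrow> bool" where
  "regvar_class \<rho> g \<longleftrightarrow>
     mono_on {0..} g \<and> (\<forall>t\<ge>0. g t \<ge> 0) \<and>
     (\<forall>x>0. ((\<lambda>t. g (x * t) / g t) \<longlongrightarrow> x powr \<rho>) at_top) \<and>
     filterlim g at_top at_top"

definition tailP :: "'a measure \<Rightarrow> ('a \<Rightarrow> real) \<Rightarrow> real \<Rightarrow> real" where
  "tailP M X t = measure M {\<omega> \<in> space M. X \<omega> > t}"

definition lambda1_upper :: "'a measure \<Rightarrow> ('a \<Rightarrow> real) \<Rightarrow> (real \<Rightarrow> real) \<Rightarrow> ereal" where
  "lambda1_upper M X g =
     - Limsup at_top (\<lambda>t::real. elog (t^2 * tailP M X t) / ereal (g (ln t)))"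

definition lambda1_lower :: "'a measure \<Rightarrow> ('a \<Rightarrow> real) \<Rightarrow> (real \<Rightarrow> real) \<Rightarrow> ereal" where
  "lambda1_lower M X g =
     - Liminf at_top (\<lambda>t::real. elog (t^2 * tailP M X t) / ereal (g (ln t)))"

end

theory Submission
  imports Defs
begin

text \<open>Write \<open>a(t) = log (t\<^sup>2 P(X > t)) / g(log t)\<close>, so that \<open>\<lambda>\<^sub>1\<close> and its lower
  counterpart are minus the upper and lower limits of \<open>a\<close> at infinity. Both normalisations
  have the form \<open>t\<^sub>n = s \<surd>n g(log n)\<^sup>p\<close> (with \<open>p = 1/2\<close> and \<open>p = -1\<close>), and
  \<open>log (n P(X > t\<^sub>n)) / g(log n) = log (n / t\<^sub>n\<^sup>2) / g(log n) + (g(log t\<^sub>n) / g(log n)) a(t\<^sub>n)\<close>.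
  The first term vanishes because \<open>log g(x)\<close> is \<open>o(x)\<close> and \<open>o(g(x))\<close>; since
  \<open>log t\<^sub>n \<sim> (log n)/2\<close>, regular variation sends the ratio in the second term to \<open>2\<^sup>-\<^sup>\<rho>\<close>.
  Finally the upper and lower limits of \<open>a\<close> along \<open>t\<^sub>n\<close> are those over all \<open>t\<close>: consecutive
  terms \<open>t\<^sub>n\<close> have bounded ratio, and \<open>a\<close> hardly increases over an interval \<open>[t, C t]\<close>,
  because the tail is monotone, \<open>t\<^sup>2 P(X > t) \<le> 1\<close> eventually (as \<open>E X\<^sup>2 < \<infinity>\<close>) and
  \<open>g(log t)\<close> is almost constant there.\<close>

section \<open>Upper and lower limits along sequences\<close>

lemma ereal_le_epsilon_contract:
  fixes x y :: ereal
  assumes le: "\<And>e. 0 < e \<Longrightarrow> e < 1 \<Longrightarrow> x \<le> y * ereal (1 / (1 + e)) + ereal e"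
  shows "x \<le> y"
proof (cases y)
  case (real r)
  have lim: "((\<lambda>e. ereal (r * (1 / (1 + e)) + e)) \<longlongrightarrow> ereal (r * (1 / (1 + 0)) + 0)) (at_right 0)"
    by (intro tendsto_intros) auto
  have "\<forall>\<^sub>F e in at_right (0::real). e \<in> {0<..<1}"
    by (rule eventually_at_right_real) simp
  then have "\<forall>\<^sub>F e in at_right 0. x \<le> ereal (r * (1 / (1 + e)) + e)"
    by eventually_elim (use le real in auto)
  with lim show ?thesis
    using real by (intro tendsto_le[OF trivial_limit_at_right_real _ tendsto_const]) auto
next
  case MInf
  then show ?thesis using le[of "1/2"] by simp
qed simp

lemma Limsup_compose_filterlim_le:
  fixes f :: "'b \<Rightarrow> 'c::complete_linorder"
  assumes "filterlim k G F"
  shows "Limsup F (\<lambda>x. f (k x)) \<le> Limsup G f"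
  unfolding Limsup_le_iff
proof (intro allI impI)
  fix y assume "y > Limsup G f"
  then have "\<forall>\<^sub>F x in G. f x < y" by (rule Limsup_lessD)
  then show "\<forall>\<^sub>F x in F. f (k x) < y"
    using assms filterlim_iff by fastforce
qed

lemma Liminf_compose_filterlim_ge:
  fixes f :: "'b \<Rightarrow> 'c::complete_linorder"
  assumes "filterlim k G F"
  shows "Liminf G f \<le> Liminf F (\<lambda>x. f (k x))"
  unfolding le_Liminf_iff
proof (intro allI impI)
  fix y assume "y < Liminf G f"
  then have "\<forall>\<^sub>F x in G. f x > y" by (rule less_LiminfD)
  then show "\<forall>\<^sub>F x in F. f (k x) > y"
    using assms filterlim_iff by fastforce
qed

lemma sequence_bracketing_index:
  fixes u :: "nat \<Rightarrow> real"
  assumes u_top: "filterlim u at_top sequentially"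
  obtains k :: "real \<Rightarrow> nat"
  where "filterlim k sequentially at_top"
    and "\<forall>\<^sub>F t in at_top. u (k t) \<le> t \<and> t < u (Suc (k t))"
proof
  define k where "k t = (LEAST m. t < u (Suc m))" for t
  have "\<exists>m. t < u (Suc m)" for t
    using u_top filterlim_at_top_dense filterlim_sequentially_Suc
    by (metis eventually_sequentially order_refl)
  then have above: "t < u (Suc (k t))" for t
    unfolding k_def by (rule LeastI_ex)
  have below: "u (k t) \<le> t" if "u 0 \<le> t" for t
  proof (cases "k t")
    case (Suc j)
    then have "\<not> t < u (Suc j)"
      unfolding k_def by (metis lessI not_less_Least)
    then show ?thesis using Suc by simp
  qed (use that in simp)
  show "\<forall>\<^sub>F t in at_top. u (k t) \<le> t \<and> t < u (Suc (k t))"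
    using eventually_ge_at_top[of "u 0"] by eventually_elim (use above below in auto)
  show "filterlim k sequentially at_top"
    unfolding filterlim_at_top
  proof
    fix N :: nat
    show "\<forall>\<^sub>F t in at_top. N \<le> k t"
      using eventually_ge_at_top[of "Max (u ` {..N})"]
    proof eventually_elim
      case (elim t)
      show ?case
      proof (rule ccontr)
        assume "\<not> N \<le> k t"
        then have "u (Suc (k t)) \<le> Max (u ` {..N})" by (intro Max_ge) auto
        with above[of t] elim show False by simp
      qed
    qed
  qed
qed

text \<open>The regularity under which the upper and lower limits of \<open>a\<close> at infinity can be
  computed along any sequence whose consecutive terms have ratio at most \<open>C\<close>.\<close>

definition scale_dominated :: "real \<Rightarrow> (real \<Rightarrow> ereal) \<Rightarrow> bool" where
  "scale_dominated C a \<longleftrightarrow>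
     (\<forall>e>0. \<forall>\<^sub>F t in at_top. \<forall>t'\<in>{t..C * t}. a t' \<le> a t * ereal (1 / (1 + e)) + ereal e)"

lemma scale_dominated_limsup:
  fixes a :: "real \<Rightarrow> ereal" and u :: "nat \<Rightarrow> real"
  assumes a: "scale_dominated C a"
    and u_top: "filterlim u at_top sequentially"
    and u_step: "\<forall>\<^sub>F n in sequentially. u (Suc n) \<le> C * u n"
  shows "limsup (\<lambda>n. a (u n)) = Limsup at_top a"
proof (rule antisym)
  obtain k where k_top: "filterlim k sequentially at_top"
    and bracket: "\<forall>\<^sub>F t in at_top. u (k t) \<le> t \<and> t < u (Suc (k t))"
    using sequence_bracketing_index[OF u_top] by blast
  have "\<forall>\<^sub>F t in at_top. u (Suc (k t)) \<le> C * u (k t)"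
    using filterlim_iff k_top u_step by blast
  with bracket have in_scale: "\<forall>\<^sub>F t in at_top. t \<in> {u (k t)..C * u (k t)}"
    by eventually_elim auto
  have uk_top: "filterlim (\<lambda>t. u (k t)) at_top at_top"
    by (rule filterlim_compose[OF u_top k_top])
  show "Limsup at_top a \<le> limsup (\<lambda>n. a (u n))"
  proof (rule ereal_le_epsilon_contract)
    fix e :: real assume e: "0 < e" "e < 1"
    have "\<forall>\<^sub>F t in at_top. \<forall>t'\<in>{u (k t)..C * u (k t)}.
            a t' \<le> a (u (k t)) * ereal (1 / (1 + e)) + ereal e"
      using a e uk_top unfolding scale_dominated_def filterlim_iff by blast
    with in_scale have "\<forall>\<^sub>F t in at_top. a t \<le> a (u (k t)) * ereal (1 / (1 + e)) + ereal e"
      by eventually_elim auto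
    then have "Limsup at_top a \<le> Limsup at_top (\<lambda>t. a (u (k t)) * ereal (1 / (1 + e)) + ereal e)"
      by (rule Limsup_mono)
    also have "\<dots> = Limsup at_top (\<lambda>t. a (u (k t))) * ereal (1 / (1 + e)) + ereal e"
      using e by (simp add: Limsup_add_ereal_right Limsup_ereal_mult_right)
    also have "\<dots> \<le> limsup (\<lambda>n. a (u n)) * ereal (1 / (1 + e)) + ereal e"
      using e by (intro add_right_mono ereal_mult_right_mono Limsup_compose_filterlim_le[OF k_top]) auto
    finally show "Limsup at_top a \<le> limsup (\<lambda>n. a (u n)) * ereal (1 / (1 + e)) + ereal e" .
  qed
  show "limsup (\<lambda>n. a (u n)) \<le> Limsup at_top a"
    by (rule Limsup_compose_filterlim_le[OF u_top])
qed

lemma scale_dominated_liminf: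
  fixes a :: "real \<Rightarrow> ereal" and u :: "nat \<Rightarrow> real"
  assumes a: "scale_dominated C a" and C: "C \<ge> 0"
    and u_top: "filterlim u at_top sequentially"
    and u_step: "\<forall>\<^sub>F n in sequentially. u (Suc n) \<le> C * u n"
  shows "liminf (\<lambda>n. a (u n)) = Liminf at_top a"
proof (rule antisym)
  obtain k where k_top: "filterlim k sequentially at_top"
    and bracket: "\<forall>\<^sub>F t in at_top. u (k t) \<le> t \<and> t < u (Suc (k t))"
    using sequence_bracketing_index[OF u_top] by blast
  have "\<forall>\<^sub>F t in at_top. u (Suc (k t)) \<le> C * u (k t)"
    using filterlim_iff k_top u_step by blast
  with bracket have next_in_scale: "\<forall>\<^sub>F t in at_top. u (Suc (k t)) \<in> {t..C * t}"
  proof eventually_elim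
    case (elim t)
    then have "C * u (k t) \<le> C * t" using C by (intro mult_left_mono) auto
    then show ?case using elim by auto
  qed
  show "liminf (\<lambda>n. a (u n)) \<le> Liminf at_top a"
  proof (rule ereal_le_epsilon_contract)
    fix e :: real assume e: "0 < e" "e < 1"
    have "\<forall>\<^sub>F t in at_top. \<forall>t'\<in>{t..C * t}. a t' \<le> a t * ereal (1 / (1 + e)) + ereal e"
      using a e unfolding scale_dominated_def by blast
    with next_in_scale
    have "\<forall>\<^sub>F t in at_top. a (u (Suc (k t))) \<le> a t * ereal (1 / (1 + e)) + ereal e"
      by eventually_elim blast
    then have "Liminf at_top (\<lambda>t. a (u (Suc (k t)))) \<le> Liminf at_top (\<lambda>t. a t * ereal (1 / (1 + e)) + ereal e)"
      by (rule Liminf_mono)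
    moreover have "liminf (\<lambda>n. a (u n)) \<le> Liminf at_top (\<lambda>t. a (u (Suc (k t))))"
      by (rule Liminf_compose_filterlim_ge[OF filterlim_compose[OF filterlim_Suc k_top]])
    moreover have "Liminf at_top (\<lambda>t. a t * ereal (1 / (1 + e)) + ereal e)
        = Liminf at_top a * ereal (1 / (1 + e)) + ereal e"
      using e by (simp add: Liminf_add_ereal_right Liminf_ereal_mult_right)
    ultimately show "liminf (\<lambda>n. a (u n)) \<le> Liminf at_top a * ereal (1 / (1 + e)) + ereal e"
      by simp
  qed
  show "Liminf at_top a \<le> liminf (\<lambda>n. a (u n))"
    by (rule Liminf_compose_filterlim_ge[OF u_top])
qed

section \<open>Regularly varying functions\<close>

lemma regvar_classD:
  assumes "regvar_class \<rho> g"
  shows "mono_on {0..} g"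
    and "\<And>x. x > 0 \<Longrightarrow> ((\<lambda>t. g (x * t) / g t) \<longlongrightarrow> x powr \<rho>) at_top"
    and "filterlim g at_top at_top"
  using assms unfolding regvar_class_def by auto

lemma regvar_eventually_ge:
  assumes "regvar_class \<rho> g"
  shows "\<forall>\<^sub>F x in at_top. C \<le> g x"
  using regvar_classD(3)[OF assms] by (simp add: filterlim_at_top)

lemma regvar_shift_le:
  assumes g: "regvar_class \<rho> g" and c: "c \<ge> 0" and e: "e > 0"
  shows "\<forall>\<^sub>F x in at_top. g (x + c) \<le> (1 + e) * g x"
proof -
  have "((\<lambda>\<eta>. (1 + \<eta>) powr \<rho>) \<longlongrightarrow> (1 + 0) powr \<rho>) (at_right (0::real))"
    by (intro tendsto_intros) auto
  then have "\<forall>\<^sub>F \<eta> in at_right 0. (1 + \<eta>) powr \<rho> < 1 + e"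
    using e by (intro order_tendstoD(2)) auto
  then obtain \<eta> where \<eta>: "\<eta> > 0" "(1 + \<eta>) powr \<rho> < 1 + e"
    using eventually_happens'[OF trivial_limit_at_right_real eventually_conj[OF eventually_at_right_less]] by blast
  have "\<forall>\<^sub>F t in at_top. g ((1 + \<eta>) * t) / g t < 1 + e"
    using order_tendstoD(2)[OF regvar_classD(2)[OF g] \<eta>(2)] \<eta>(1) by simp
  then show ?thesis
    using regvar_eventually_ge[OF g, of 1] eventually_ge_at_top[of "c / \<eta>"] eventually_ge_at_top[of 0]
  proof eventually_elim
    case (elim t)
    have "c \<le> \<eta> * t" using elim(3) \<eta>(1) by (simp add: field_simps)
    then have "g (t + c) \<le> g ((1 + \<eta>) * t)"
      using elim(4) c \<eta>(1) by (intro mono_onD[OF regvar_classD(1)[OF g]]) (auto simp: algebra_simps)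
    also have "\<dots> < (1 + e) * g t" using elim(1,2) by (simp add: pos_divide_less_eq)
    finally show ?case by simp
  qed
qed

lemma linear_bound_from_unit_steps:
  fixes f :: "real \<Rightarrow> real"
  assumes mono: "mono_on {x0..} f" and step: "\<And>x. x \<ge> x0 \<Longrightarrow> f (x + 1) \<le> f x + d"
    and d: "d \<ge> 0" and x: "x \<ge> x0"
  shows "f x \<le> f x0 + d * (x - x0 + 1)"
proof -
  have iter: "f (x0 + real k) \<le> f x0 + d * real k" for k :: nat
  proof (induction k)
    case (Suc k)
    have "f (x0 + real (Suc k)) = f (x0 + real k + 1)" by (simp add: algebra_simps)
    also have "\<dots> \<le> f (x0 + real k) + d" by (rule step) simp
    finally show ?case using Suc by (simp add: algebra_simps)
  qed simp
  define k where "k = nat \<lceil>x - x0\<rceil>"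
  have k: "x - x0 \<le> real k" "real k \<le> x - x0 + 1" using x unfolding k_def by linarith+
  have "f x \<le> f (x0 + real k)" using k x by (intro mono_onD[OF mono]) auto
  also have "\<dots> \<le> f x0 + d * real k" by (rule iter)
  also have "\<dots> \<le> f x0 + d * (x - x0 + 1)" using k d by (intro add_left_mono mult_left_mono) auto
  finally show ?thesis .
qed

lemma tendsto_div_0_of_unit_steps:
  fixes f :: "real \<Rightarrow> real"
  assumes mono: "\<forall>\<^sub>F x0 in at_top. mono_on {x0..} f" and nonneg: "\<forall>\<^sub>F x in at_top. 0 \<le> f x"
    and step: "\<And>d. d > 0 \<Longrightarrow> \<forall>\<^sub>F x in at_top. f (x + 1) \<le> f x + d"
  shows "((\<lambda>x. f x / x) \<longlongrightarrow> 0) at_top"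
proof (rule tendstoI)
  fix e :: real assume e: "e > 0"
  define d where "d = e / 2"
  have d: "d > 0" using e by (simp add: d_def)
  obtain x0 where x0: "mono_on {x0..} f" "\<And>x. x \<ge> x0 \<Longrightarrow> f (x + 1) \<le> f x + d \<and> 0 \<le> f x"
    using eventually_conj[OF mono eventually_all_ge_at_top[OF eventually_conj[OF step[OF d] nonneg]]]
    by (auto simp: eventually_at_top_linorder)
  have bound: "f x \<le> f x0 + d * (x - x0 + 1)" if "x \<ge> x0" for x
    using linear_bound_from_unit_steps[OF x0(1) _ _ that] x0(2) d by auto
  define B where "B = \<bar>f x0 + d * (1 - x0)\<bar>"
  show "\<forall>\<^sub>F x in at_top. dist (f x / x) 0 < e"
    using eventually_ge_at_top[of x0] eventually_gt_at_top[of "B / d"] eventually_gt_at_top[of 0]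
  proof eventually_elim
    case (elim x)
    have "f x \<le> d * x + B" using bound[OF elim(1)] by (simp add: B_def algebra_simps)
    also have "\<dots> < e * x" using elim(2) d by (simp add: d_def field_simps)
    finally have "f x < e * x" .
    then show ?case using x0(2)[OF elim(1)] elim(3) by (simp add: divide_less_eq)
  qed
qed

lemma regvar_ln_div_tendsto_0:
  assumes g: "regvar_class \<rho> g"
  shows "((\<lambda>x. ln (g x) / x) \<longlongrightarrow> 0) at_top"
proof (rule tendsto_div_0_of_unit_steps)
  have "\<forall>\<^sub>F x0 in at_top. \<forall>x\<ge>x0. 1 \<le> g x \<and> 0 \<le> x"
    using regvar_eventually_ge[OF g, of 1] eventually_ge_at_top[of 0]
    by (intro eventually_all_ge_at_top) (auto intro: eventually_conj)
  then show "\<forall>\<^sub>F x0 in at_top. mono_on {x0..} (\<lambda>x. ln (g x))"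
  proof eventually_elim
    case (elim x0)
    show ?case
    proof (rule mono_onI)
      fix x y assume "x \<in> {x0..}" "y \<in> {x0..}" "x \<le> y"
      then have "g x \<le> g y" "1 \<le> g x"
        using elim by (auto intro: mono_onD[OF regvar_classD(1)[OF g]])
      then show "ln (g x) \<le> ln (g y)" by simp
    qed
  qed
  show "\<forall>\<^sub>F x in at_top. 0 \<le> ln (g x)"
    using regvar_eventually_ge[OF g, of 1] by eventually_elim simp
  fix d :: real assume "d > 0"
  then have "\<forall>\<^sub>F x in at_top. g (x + 1) \<le> exp d * g x"
    using regvar_shift_le[OF g, of 1 "exp d - 1"] by simp
  then show "\<forall>\<^sub>F x in at_top. ln (g (x + 1)) \<le> ln (g x) + d"
    using regvar_eventually_ge[OF g, of 1] eventually_ge_at_top[of 0]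
  proof eventually_elim
    case (elim x)
    have "g x \<le> g (x + 1)" using elim(3) by (intro mono_onD[OF regvar_classD(1)[OF g]]) auto
    then have "ln (g (x + 1)) \<le> ln (exp d * g x)"
      using elim(1,2) by (subst ln_le_cancel_iff) auto
    then show ?case using elim(2) by (simp add: ln_mult)
  qed
qed

lemma regvar_ratio_eventually_less:
  assumes g: "regvar_class \<rho> g" and u: "filterlim u at_top F"
    and v: "\<forall>\<^sub>F n in F. 0 \<le> v n \<and> v n \<le> c * u n" and c: "c > 0" "c powr \<rho> < y"
  shows "\<forall>\<^sub>F n in F. g (v n) / g (u n) < y"
  using order_tendstoD(2)[OF filterlim_compose[OF regvar_classD(2)[OF g c(1)] u] c(2)]
    filterlim_iff[THEN iffD1, OF u, rule_format, OF regvar_eventually_ge[OF g, of 1]] v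
proof eventually_elim
  case (elim n)
  then have "g (v n) / g (u n) \<le> g (c * u n) / g (u n)"
    by (intro divide_right_mono mono_onD[OF regvar_classD(1)[OF g]]) auto
  then show ?case using elim by linarith
qed

lemma regvar_ratio_eventually_greater:
  assumes g: "regvar_class \<rho> g" and u: "filterlim u at_top F"
    and v: "\<forall>\<^sub>F n in F. c * u n \<le> v n" and c: "c > 0" "y < c powr \<rho>"
  shows "\<forall>\<^sub>F n in F. y < g (v n) / g (u n)"
  using order_tendstoD(1)[OF filterlim_compose[OF regvar_classD(2)[OF g c(1)] u] c(2)]
    filterlim_iff[THEN iffD1, OF u, rule_format, OF eventually_conj[OF eventually_ge_at_top[of 0]
        regvar_eventually_ge[OF g, of 1]]] v
proof eventually_elim
  case (elim n)
  then have "0 \<le> c * u n" using c(1) by simp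
  then have "g (c * u n) / g (u n) \<le> g (v n) / g (u n)"
    using elim by (intro divide_right_mono mono_onD[OF regvar_classD(1)[OF g]]) auto
  then show ?case using elim by linarith
qed

lemma regvar_ratio_tendsto:
  assumes g: "regvar_class \<rho> g" and u: "filterlim u at_top F"
    and v: "((\<lambda>n. v n / u n) \<longlongrightarrow> c) F" and c: "c > 0"
  shows "((\<lambda>n. g (v n) / g (u n)) \<longlongrightarrow> c powr \<rho>) F"
proof -
  have cont: "((\<lambda>x. x powr \<rho>) \<longlongrightarrow> c powr \<rho>) (at c)"
    using c by (intro tendsto_intros) auto
  have u_pos: "\<forall>\<^sub>F n in F. 0 < u n"
    using filterlim_iff u eventually_gt_at_top by blast
  show ?thesis
  proof (rule order_tendstoI)
    fix y
    assume "y > c powr \<rho>"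
    then obtain c' where c': "c < c'" "c' powr \<rho> < y"
      using eventually_happens'[OF trivial_limit_at_right_real eventually_conj[OF eventually_at_right_less
            order_tendstoD(2)[OF filterlim_mono[OF cont order_refl at_le]]]]
      by blast
    have "\<forall>\<^sub>F n in F. 0 \<le> v n \<and> v n \<le> c' * u n"
      using order_tendstoD(1)[OF v c] order_tendstoD(2)[OF v c'(1)] u_pos
      by eventually_elim (simp add: field_simps)
    then show "\<forall>\<^sub>F n in F. g (v n) / g (u n) < y"
      using c c' by (intro regvar_ratio_eventually_less[OF g u]) auto
  next
    fix y
    assume "y < c powr \<rho>"
    then obtain c' where c': "0 < c'" "c' < c" "y < c' powr \<rho>"
      using eventually_happens'[OF trivial_limit_at_left_real eventually_conj[OF eventually_at_left_real[OF c]
            order_tendstoD(1)[OF filterlim_mono[OF cont order_refl at_le]]]]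
      by auto
    have "\<forall>\<^sub>F n in F. c' * u n \<le> v n"
      using order_tendstoD(1)[OF v c'(2)] u_pos by eventually_elim (simp add: field_simps)
    then show "\<forall>\<^sub>F n in F. y < g (v n) / g (u n)"
      using c' by (intro regvar_ratio_eventually_greater[OF g u]) auto
  qed
qed

lemma regvar_ln_scale_le:
  assumes g: "regvar_class \<rho> g" and C: "C \<ge> 1" and e: "e > 0"
  shows "\<forall>\<^sub>F t in at_top. \<forall>t'\<in>{t..C * t}. g (ln t') \<le> (1 + e) * g (ln t)"
proof -
  have "\<forall>\<^sub>F t in at_top. g (ln t + ln C) \<le> (1 + e) * g (ln t)"
    using regvar_shift_le[OF g _ e, of "ln C"] C filterlim_iff ln_at_top by auto
  then show ?thesis
    using eventually_ge_at_top[of 1]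
  proof eventually_elim
    case (elim t)
    show ?case
    proof
      fix t' assume t': "t' \<in> {t..C * t}"
      have "ln t' \<le> ln (C * t)" using elim(2) t' by simp
      also have "\<dots> = ln t + ln C" using elim(2) C by (simp add: ln_mult)
      finally have "g (ln t') \<le> g (ln t + ln C)"
        using elim(2) t' C by (intro mono_onD[OF regvar_classD(1)[OF g]]) auto
      then show "g (ln t') \<le> (1 + e) * g (ln t)" using elim(1) by simp
    qed
  qed
qed

section \<open>The normalised logarithmic tail\<close>

lemma elog_pos: "x > 0 \<Longrightarrow> elog x = ereal (ln x)"
  by (simp add: elog_def)

lemma elog_nonpos: "x \<le> 0 \<Longrightarrow> elog x = -\<infinity>"
  by (simp add: elog_def)

lemma elog_divide_split:
  assumes "u > 0" "w > 0" "v \<ge> 0" "G > 0" "H > 0"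
  shows "elog (u * v) / ereal G = ereal (ln (u / w^2) / G) + ereal (H / G) * (elog (w^2 * v) / ereal H)"
proof (cases "v = 0")
  case True
  then show ?thesis using assms by (simp add: elog_nonpos divide_ereal_def)
next
  case False
  then have "v > 0" using assms by simp
  then have "ln (u * v) = ln (u / w^2) + ln (w^2 * v)"
    using assms by (simp add: ln_mult ln_div)
  then show ?thesis
    using assms \<open>v > 0\<close> by (simp add: elog_pos add_divide_distrib)
qed

lemma elog_scaled_tail_le:
  fixes t t' T T' G G' C e :: real
  assumes t: "0 < t" "t \<le> t'" "t' \<le> C * t" and T: "0 \<le> T'" "T' \<le> T" "t^2 * T \<le> 1"
    and G: "0 < G" "G \<le> G'" "G' \<le> (1 + e) * G" "2 * ln C \<le> e * G" and e: "e > 0"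
  shows "elog (t'^2 * T') / ereal G' \<le> elog (t^2 * T) / ereal G * ereal (1 / (1 + e)) + ereal e"
proof (cases "T' = 0")
  case True
  then show ?thesis using G by (simp add: elog_nonpos divide_ereal_def)
next
  case False
  define A where "A = ln (t^2 * T)"
  have C: "C \<ge> 1" using t by (metis mult_le_cancel_right1 order.trans less_le_not_le)
  have pos: "0 < T'" "0 < T" using T False by auto
  have A: "A \<le> 0" using t T pos unfolding A_def by simp
  have "t'^2 * T' \<le> (C * t)^2 * T"
    using t T C by (intro mult_mono power_mono) auto
  then have "ln (t'^2 * T') \<le> ln (C^2 * (t^2 * T))"
    using t pos C by (subst ln_le_cancel_iff) (auto simp: power_mult_distrib mult.assoc)
  also have "\<dots> = A + 2 * ln C"
    using t pos C by (simp add: A_def ln_mult ln_realpow)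
  finally have "ln (t'^2 * T') / G' \<le> A / G' + 2 * ln C / G'"
    using G by (simp add: divide_right_mono add_divide_distrib[symmetric])
  also have "A / G' \<le> A / ((1 + e) * G)"
    using A G e by (intro divide_left_mono_neg) auto
  also have "2 * ln C / G' \<le> 2 * ln C / G"
    using G C by (intro divide_left_mono) auto
  also have "2 * ln C / G \<le> e"
    using G by (simp add: divide_le_eq mult.commute)
  finally have "ln (t'^2 * T') / G' \<le> A / G * (1 / (1 + e)) + e"
    by (simp add: field_simps)
  then show ?thesis
    using t pos G by (simp add: elog_pos A_def)
qed

lemma tail_scale_dominated:
  fixes T :: "real \<Rightarrow> real"
  assumes g: "regvar_class \<rho> g" and C: "C \<ge> 1"
    and T_nonneg: "\<And>t. T t \<ge> 0" and T_anti: "\<And>t t'. t \<le> t' \<Longrightarrow> T t' \<le> T t"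
    and T_small: "\<forall>\<^sub>F t in at_top. t^2 * T t \<le> 1"
  shows "scale_dominated C (\<lambda>t. elog (t^2 * T t) / ereal (g (ln t)))"
  unfolding scale_dominated_def
proof (intro allI impI)
  fix e :: real assume e: "e > 0"
  have "\<forall>\<^sub>F t in at_top. max 1 (2 * ln C / e) \<le> g (ln t)"
    using regvar_eventually_ge[OF g] filterlim_iff ln_at_top by blast
  then show "\<forall>\<^sub>F t in at_top. \<forall>t'\<in>{t..C * t}.
      elog (t'^2 * T t') / ereal (g (ln t')) \<le> elog (t^2 * T t) / ereal (g (ln t)) * ereal (1 / (1 + e)) + ereal e"
    using regvar_ln_scale_le[OF g C e] T_small eventually_ge_at_top[of 1]
  proof eventually_elim
    case (elim t)
    show ?case
    proof
      fix t' assume t': "t' \<in> {t..C * t}"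
      have "g (ln t) \<le> g (ln t')"
        using elim(4) t' by (intro mono_onD[OF regvar_classD(1)[OF g]]) auto
      then show "elog (t'^2 * T t') / ereal (g (ln t'))
          \<le> elog (t^2 * T t) / ereal (g (ln t)) * ereal (1 / (1 + e)) + ereal e"
        using elim t' e T_nonneg[of t'] T_anti[of t t']
        by (intro elog_scaled_tail_le[where C = C]) (auto simp: field_simps)
    qed
  qed
qed

section \<open>The normalising sequences\<close>

lemma powr_le_of_bounded_ratio:
  fixes a b p :: real
  assumes "0 < a" "a \<le> b" "b \<le> 2 * a"
  shows "b powr p \<le> 2 powr \<bar>p\<bar> * a powr p"
proof (cases "p \<ge> 0")
  case True
  then have "b powr p \<le> (2 * a) powr p" using assms by (intro powr_mono2) auto
  then show ?thesis using True assms by (simp add: powr_mult)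
next
  case False
  then have "b powr p \<le> a powr p" using assms by (intro powr_mono2') auto
  also have "\<dots> \<le> 2 powr \<bar>p\<bar> * a powr p"
    using mult_right_mono[OF ge_one_powr_ge_zero[of 2 "\<bar>p\<bar>"], of "a powr p"] by simp
  finally show ?thesis .
qed

lemma filterlim_ln_real_sequentially: "filterlim (\<lambda>n. ln (real n)) at_top sequentially"
  by (rule filterlim_compose[OF ln_at_top filterlim_real_sequentially])

lemma regvar_ln_real_sequentially:
  assumes "regvar_class \<rho> g"
  shows "filterlim (\<lambda>n. g (ln (real n))) at_top sequentially"
  by (rule filterlim_compose[OF regvar_classD(3)[OF assms] filterlim_ln_real_sequentially])

lemma regular_scaling_ln:
  fixes u :: "nat \<Rightarrow> real"
  assumes g: "regvar_class \<rho> g" and s: "s > 0"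
    and u: "\<forall>\<^sub>F n in sequentially. u n = s * sqrt (real n) * g (ln (real n)) powr p"
  shows "\<forall>\<^sub>F n in sequentially. 0 < u n \<and> ln (u n) = ln s + ln (real n) / 2 + p * ln (g (ln (real n)))"
  using u eventually_ge_at_top[of 1]
    filterlim_iff[THEN iffD1, OF regvar_ln_real_sequentially[OF g], rule_format, OF eventually_gt_at_top[of 0]]
  by eventually_elim (use s in \<open>simp add: ln_mult ln_sqrt\<close>)

lemma regular_scaling_ln_ratio:
  fixes u :: "nat \<Rightarrow> real"
  assumes g: "regvar_class \<rho> g" and s: "s > 0"
    and u: "\<forall>\<^sub>F n in sequentially. u n = s * sqrt (real n) * g (ln (real n)) powr p"
  shows "((\<lambda>n. ln (u n) / ln (real n)) \<longlongrightarrow> 1 / 2) sequentially"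
proof -
  note lnn = filterlim_ln_real_sequentially
  have "((\<lambda>n. ln s / ln (real n)) \<longlongrightarrow> 0) sequentially"
    by (rule tendsto_divide_0[OF tendsto_const filterlim_at_top_imp_at_infinity[OF lnn]])
  moreover have "((\<lambda>n. ln (g (ln (real n))) / ln (real n)) \<longlongrightarrow> 0) sequentially"
    by (rule filterlim_compose[OF regvar_ln_div_tendsto_0[OF g] lnn])
  ultimately have "((\<lambda>n. ln s / ln (real n) + 1 / 2 + p * (ln (g (ln (real n))) / ln (real n)))
      \<longlongrightarrow> 0 + 1 / 2 + p * 0) sequentially"
    by (intro tendsto_add tendsto_mult tendsto_const)
  moreover have "\<forall>\<^sub>F n in sequentially.
      ln s / ln (real n) + 1 / 2 + p * (ln (g (ln (real n))) / ln (real n)) = ln (u n) / ln (real n)"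
    using regular_scaling_ln[OF g s u] eventually_ge_at_top[of 2]
  proof eventually_elim
    case (elim n)
    then have ln_u: "ln (u n) = ln s + ln (real n) / 2 + p * ln (g (ln (real n)))" by blast
    have "ln (real n) > 0" using elim(2) by simp
    then show ?case unfolding ln_u by (simp add: field_simps)
  qed
  ultimately show ?thesis by (simp add: tendsto_cong)
qed

lemma regular_scaling_at_top:
  fixes u :: "nat \<Rightarrow> real"
  assumes g: "regvar_class \<rho> g" and s: "s > 0"
    and u: "\<forall>\<^sub>F n in sequentially. u n = s * sqrt (real n) * g (ln (real n)) powr p"
  shows "filterlim u at_top sequentially"
proof -
  have "filterlim (\<lambda>n. ln (u n) / ln (real n) * ln (real n)) at_top sequentially"
    by (rule filterlim_tendsto_pos_mult_at_top[OF regular_scaling_ln_ratio[OF g s u] _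
          filterlim_ln_real_sequentially]) simp
  moreover have "\<forall>\<^sub>F n in sequentially. ln (u n) / ln (real n) * ln (real n) = ln (u n)"
    using eventually_ge_at_top[of 2] by eventually_elim simp
  ultimately have "filterlim (\<lambda>n. exp (ln (u n))) at_top sequentially"
    by (intro filterlim_compose[OF exp_at_top]) (simp add: filterlim_cong)
  moreover have "\<forall>\<^sub>F n in sequentially. exp (ln (u n)) = u n"
    using regular_scaling_ln[OF g s u] by eventually_elim (intro exp_ln, blast)
  ultimately show ?thesis by (simp add: filterlim_cong)
qed

lemma regular_scaling_error_tendsto_0:
  fixes u :: "nat \<Rightarrow> real"
  assumes g: "regvar_class \<rho> g" and s: "s > 0"
    and u: "\<forall>\<^sub>F n in sequentially. u n = s * sqrt (real n) * g (ln (real n)) powr p"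
  shows "((\<lambda>n. ln (real n / (u n)^2) / g (ln (real n))) \<longlongrightarrow> 0) sequentially"
proof -
  define G where "G n = g (ln (real n))" for n
  have G_top: "filterlim G at_top sequentially"
    unfolding G_def by (rule regvar_ln_real_sequentially[OF g])
  have "((\<lambda>n. - 2 * ln s / G n) \<longlongrightarrow> 0) sequentially"
    by (rule tendsto_divide_0[OF tendsto_const filterlim_at_top_imp_at_infinity[OF G_top]])
  moreover have "((\<lambda>n. ln (G n) / G n) \<longlongrightarrow> 0) sequentially"
    by (rule filterlim_compose[OF ln_x_over_x_tendsto_0 G_top])
  ultimately have "((\<lambda>n. - 2 * ln s / G n - 2 * p * (ln (G n) / G n)) \<longlongrightarrow> 0 - 2 * p * 0) sequentially"
    by (intro tendsto_diff tendsto_mult tendsto_const)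
  moreover have "\<forall>\<^sub>F n in sequentially.
      - 2 * ln s / G n - 2 * p * (ln (G n) / G n) = ln (real n / (u n)^2) / G n"
    using regular_scaling_ln[OF g s u] eventually_ge_at_top[of 1]
  proof eventually_elim
    case (elim n)
    then have "ln (real n / (u n)^2) = - 2 * ln s - 2 * p * ln (G n)"
      by (simp add: ln_div ln_realpow G_def)
    then show ?case by (simp add: diff_divide_distrib)
  qed
  ultimately show ?thesis by (simp add: tendsto_cong G_def)
qed

lemma regular_scaling_step:
  fixes u :: "nat \<Rightarrow> real"
  assumes g: "regvar_class \<rho> g" and s: "s > 0"
    and u: "\<forall>\<^sub>F n in sequentially. u n = s * sqrt (real n) * g (ln (real n)) powr p"
  shows "\<forall>\<^sub>F n in sequentially. u (Suc n) \<le> 2 * 2 powr \<bar>p\<bar> * u n"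
proof -
  define G where "G n = g (ln (real n))" for n
  have "\<forall>\<^sub>F x in at_top. g (x + ln 2) \<le> 2 * g x \<and> 1 \<le> g x"
    using regvar_shift_le[OF g, of "ln 2" 1] regvar_eventually_ge[OF g, of 1] by (simp add: eventually_conj)
  then have "\<forall>\<^sub>F n in sequentially. g (ln (real n) + ln 2) \<le> 2 * G n \<and> 1 \<le> G n"
    unfolding G_def by (rule filterlim_iff[THEN iffD1, OF filterlim_ln_real_sequentially, rule_format])
  then show ?thesis
    using u eventually_sequentially_Suc[THEN iffD2, OF u] eventually_ge_at_top[of 1]
  proof eventually_elim
    case (elim n)
    have n: "real n \<ge> 1" using elim(4) by simp
    have "ln (real (Suc n)) \<le> ln (2 * real n)" using n by simp
    also have "\<dots> = ln (real n) + ln 2" using n by (simp add: ln_mult)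
    finally have "ln (real (Suc n)) \<le> ln (real n) + ln 2" .
    then have "G (Suc n) \<le> g (ln (real n) + ln 2)"
      using n unfolding G_def by (intro mono_onD[OF regvar_classD(1)[OF g]]) auto
    moreover have "G n \<le> G (Suc n)"
      using n unfolding G_def by (intro mono_onD[OF regvar_classD(1)[OF g]]) auto
    ultimately have G: "G n \<le> G (Suc n)" "G (Suc n) \<le> 2 * G n" using elim(1) by auto
    have "sqrt (real (Suc n)) \<le> sqrt (4 * real n)" using n by simp
    then have sqrt: "sqrt (real (Suc n)) \<le> 2 * sqrt (real n)" by (simp add: real_sqrt_mult)
    have "u (Suc n) = s * sqrt (real (Suc n)) * G (Suc n) powr p"
      using elim(3) by (simp add: G_def)
    also have "\<dots> \<le> s * (2 * sqrt (real n)) * (2 powr \<bar>p\<bar> * G n powr p)"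
      using s sqrt powr_le_of_bounded_ratio[OF _ G, of p] elim(1)
      by (intro mult_mono mult_left_mono) auto
    also have "\<dots> = 2 * 2 powr \<bar>p\<bar> * u n"
      using elim(2) by (simp add: G_def)
    finally show ?case .
  qed
qed

lemma limsup_liminf_affine_perturbation:
  fixes x y :: "nat \<Rightarrow> ereal" and e r :: "nat \<Rightarrow> real"
  assumes y: "\<forall>\<^sub>F n in sequentially. y n = ereal (e n) + ereal (r n) * x n"
    and e: "e \<longlonglongrightarrow> 0" and r: "r \<longlonglongrightarrow> q" and q: "q > 0"
  shows "limsup y = ereal q * limsup x" and "liminf y = ereal q * liminf x"
proof -
  have e': "(\<lambda>n. ereal (e n)) \<longlonglongrightarrow> ereal 0" and r': "(\<lambda>n. ereal (r n)) \<longlonglongrightarrow> ereal q"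
    using e r by (auto intro: tendsto_ereal)
  have "limsup y = limsup (\<lambda>n. ereal (e n) + ereal (r n) * x n)"
    by (rule Limsup_eq[OF y])
  then show "limsup y = ereal q * limsup x"
    using q by (simp add: ereal_limsup_lim_add[OF e'] ereal_limsup_lim_mult[OF r'])
  have "liminf y = liminf (\<lambda>n. ereal (e n) + ereal (r n) * x n)"
    by (rule Liminf_eq[OF y])
  then show "liminf y = ereal q * liminf x"
    using q by (simp add: ereal_liminf_lim_add[OF e'] ereal_liminf_lim_mult[OF r'])
qed

lemma limsup_liminf_along_regular_scaling:
  fixes T :: "real \<Rightarrow> real" and u :: "nat \<Rightarrow> real"
  assumes g: "regvar_class \<rho> g" and s: "s > 0"
    and u: "\<forall>\<^sub>F n in sequentially. u n = s * sqrt (real n) * g (ln (real n)) powr p"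
    and T_nonneg: "\<And>t. T t \<ge> 0" and T_anti: "\<And>t t'. t \<le> t' \<Longrightarrow> T t' \<le> T t"
    and T_small: "\<forall>\<^sub>F t in at_top. t^2 * T t \<le> 1"
  defines "a \<equiv> \<lambda>t. elog (t^2 * T t) / ereal (g (ln t))"
  shows "limsup (\<lambda>n. elog (real n * T (u n)) / ereal (g (ln (real n))))
           = Limsup at_top a / ereal (2 powr \<rho>)"
    and "liminf (\<lambda>n. elog (real n * T (u n)) / ereal (g (ln (real n))))
           = Liminf at_top a / ereal (2 powr \<rho>)"
proof -
  have u_top: "filterlim u at_top sequentially"
    by (rule regular_scaling_at_top[OF g s u])
  have ln_u_top: "filterlim (\<lambda>n. ln (u n)) at_top sequentially"
    by (rule filterlim_compose[OF ln_at_top u_top])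
  define r where "r n = g (ln (u n)) / g (ln (real n))" for n
  define err where "err n = ln (real n / (u n)^2) / g (ln (real n))" for n
  have split: "\<forall>\<^sub>F n in sequentially.
      elog (real n * T (u n)) / ereal (g (ln (real n))) = ereal (err n) + ereal (r n) * a (u n)"
    using eventually_ge_at_top[of 1] regular_scaling_ln[OF g s u]
      filterlim_iff[THEN iffD1, OF filterlim_ln_real_sequentially, rule_format, OF regvar_eventually_ge[OF g, of 1]]
      filterlim_iff[THEN iffD1, OF ln_u_top, rule_format, OF regvar_eventually_ge[OF g, of 1]]
  proof eventually_elim
    case (elim n)
    then show ?case
      unfolding a_def r_def err_def by (intro elog_divide_split) (auto intro: T_nonneg)
  qed
  have r_lim: "r \<longlonglongrightarrow> (1 / 2) powr \<rho>"
    unfolding r_def using regular_scaling_ln_ratio[OF g s u]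
    by (intro regvar_ratio_tendsto[OF g filterlim_ln_real_sequentially]) auto
  have err_lim: "err \<longlonglongrightarrow> 0"
    unfolding err_def by (rule regular_scaling_error_tendsto_0[OF g s u])
  have "scale_dominated (2 * 2 powr \<bar>p\<bar>) a"
    unfolding a_def using ge_one_powr_ge_zero[of 2 "\<bar>p\<bar>"]
    by (intro tail_scale_dominated[OF g _ T_nonneg T_anti T_small]) auto
  then have along: "limsup (\<lambda>n. a (u n)) = Limsup at_top a" "liminf (\<lambda>n. a (u n)) = Liminf at_top a"
    using scale_dominated_limsup[OF _ u_top] scale_dominated_liminf[OF _ _ u_top]
      regular_scaling_step[OF g s u] by auto
  have half: "ereal ((1 / 2) powr \<rho>) * L = L / ereal (2 powr \<rho>)" for L :: ereal
    by (simp add: divide_ereal_def powr_divide inverse_eq_divide mult.commute)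
  note affine = limsup_liminf_affine_perturbation[OF split err_lim r_lim]
  show "limsup (\<lambda>n. elog (real n * T (u n)) / ereal (g (ln (real n))))
      = Limsup at_top a / ereal (2 powr \<rho>)"
    using affine(1) along half by simp
  show "liminf (\<lambda>n. elog (real n * T (u n)) / ereal (g (ln (real n))))
      = Liminf at_top a / ereal (2 powr \<rho>)"
    using affine(2) along half by simp
qed

section \<open>Tails of square-integrable random variables\<close>

lemma tailP_antimono:
  assumes "finite_measure M" "X \<in> borel_measurable M" "t \<le> t'"
  shows "tailP M X t' \<le> tailP M X t"
  unfolding tailP_def using assms by (intro finite_measure.finite_measure_mono) auto

lemma square_tailP_le_integral:
  assumes M: "finite_measure M" and X: "X \<in> borel_measurable M"
    and X2: "integrable M (\<lambda>\<omega>. (X \<omega>)^2)" and t: "t \<ge> 0"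
  shows "t^2 * tailP M X t \<le> (\<integral>\<omega>. (if X \<omega> > t then (X \<omega>)^2 else 0) \<partial>M)"
proof -
  interpret finite_measure M by (rule M)
  note [measurable] = X
  define A where "A = {\<omega> \<in> space M. X \<omega> > t}"
  have A: "A \<in> sets M" unfolding A_def by measurable
  have "t^2 * tailP M X t = (\<integral>\<omega>. t^2 * indicator A \<omega> \<partial>M)"
    using A by (simp add: tailP_def A_def[symmetric])
  also have "\<dots> \<le> (\<integral>\<omega>. (if X \<omega> > t then (X \<omega>)^2 else 0) \<partial>M)"
    using A t
    by (intro integral_mono integrable_mult_right integrable_real_indicator
        Bochner_Integration.integrable_bound[OF X2])
      (auto simp: A_def indicator_def emeasure_eq_measure intro!: power_mono)
  finally show ?thesis .
qed

lemma square_tailP_tendsto_0: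
  assumes M: "finite_measure M" and X: "X \<in> borel_measurable M"
    and X2: "integrable M (\<lambda>\<omega>. (X \<omega>)^2)"
  shows "((\<lambda>t. t^2 * tailP M X t) \<longlongrightarrow> 0) at_top"
proof -
  note [measurable] = X
  define S where "S = (\<lambda>t \<omega>. if X \<omega> > t then (X \<omega>)^2 else 0)"
  have "((\<lambda>t. integral\<^sup>L M (S t)) \<longlongrightarrow> integral\<^sup>L M (\<lambda>\<omega>. 0)) at_top"
  proof (rule integral_dominated_convergence_at_top[OF _ _ X2])
    show "AE \<omega> in M. ((\<lambda>t. S t \<omega>) \<longlongrightarrow> 0) at_top"
    proof (rule AE_I2)
      fix \<omega>
      have "\<forall>\<^sub>F t in at_top. S t \<omega> = 0"
        using eventually_ge_at_top[of "X \<omega>"] by eventually_elim (auto simp: S_def)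
      then show "((\<lambda>t. S t \<omega>) \<longlongrightarrow> 0) at_top" by (rule tendsto_eventually)
    qed
    show "\<forall>\<^sub>F t in at_top. AE \<omega> in M. norm (S t \<omega>) \<le> (X \<omega>)^2"
      by (intro always_eventually allI AE_I2) (auto simp: S_def)
    show "S t \<in> borel_measurable M" for t unfolding S_def by measurable
  qed simp
  then have lim: "((\<lambda>t. integral\<^sup>L M (S t)) \<longlongrightarrow> 0) at_top" by simp
  have "\<forall>\<^sub>F t in at_top. 0 \<le> t^2 * tailP M X t"
    by (simp add: tailP_def)
  moreover have "\<forall>\<^sub>F t in at_top. t^2 * tailP M X t \<le> integral\<^sup>L M (S t)"
    using eventually_ge_at_top[of 0]
    by (rule eventually_mono) (simp add: S_def square_tailP_le_integral[OF M X X2])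
  ultimately show ?thesis
    by (rule tendsto_sandwich[OF _ _ tendsto_const lim])
qed

theorem lemma3p3:
  fixes M :: "'a measure" and X :: "'a \<Rightarrow> real" and g :: "real \<Rightarrow> real"
    and \<rho> s :: real
  assumes "prob_space M"
    and "X \<in> borel_measurable M"
    and "integrable M (\<lambda>\<omega>. (X \<omega>)^2)"
    and "\<rho> \<ge> 0"
    and "regvar_class \<rho> g"
    and "s > 0"
  shows
    "limsup (\<lambda>n::nat. elog (real n * tailP M X (s * sqrt (real n * g (ln (real n)))))
                        / ereal (g (ln (real n))))
       = - lambda1_upper M X g / ereal (2 powr \<rho>)
    \<and> liminf (\<lambda>n::nat. elog (real n * tailP M X (s * sqrt (real n * g (ln (real n)))))
                        / ereal (g (ln (real n))))
       = - lambda1_lower M X g / ereal (2 powr \<rho>)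
    \<and> limsup (\<lambda>n::nat. elog (real n * tailP M X (s * sqrt (real n) / g (ln (real n))))
                        / ereal (g (ln (real n))))
       = - lambda1_upper M X g / ereal (2 powr \<rho>)
    \<and> liminf (\<lambda>n::nat. elog (real n * tailP M X (s * sqrt (real n) / g (ln (real n))))
                        / ereal (g (ln (real n))))
       = - lambda1_lower M X g / ereal (2 powr \<rho>)"
proof -
  have M: "finite_measure M" using assms(1) by (rule prob_space.axioms(1))
  note g = assms(5) and s = assms(6)
  have T_nonneg: "tailP M X t \<ge> 0" for t by (simp add: tailP_def)
  note T_anti = tailP_antimono[OF M assms(2)]
  have T_small: "\<forall>\<^sub>F t in at_top. t^2 * tailP M X t \<le> 1"
    using order_tendstoD(2)[OF square_tailP_tendsto_0[OF M assms(2,3)], of 1]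
    by (auto elim: eventually_mono)
  have G_pos: "\<forall>\<^sub>F n in sequentially. 0 < g (ln (real n))"
    using regvar_ln_real_sequentially[OF g] by (simp add: filterlim_at_top_dense)
  have "\<forall>\<^sub>F n in sequentially. s * sqrt (real n * g (ln (real n)))
      = s * sqrt (real n) * g (ln (real n)) powr (1 / 2)"
    using G_pos by eventually_elim (simp add: real_sqrt_mult powr_half_sqrt)
  note scale1 = limsup_liminf_along_regular_scaling[OF g s this T_nonneg T_anti T_small]
  have "\<forall>\<^sub>F n in sequentially. s * sqrt (real n) / g (ln (real n))
      = s * sqrt (real n) * g (ln (real n)) powr -1"
    using G_pos by eventually_elim (simp add: powr_neg_one)
  note scale2 = limsup_liminf_along_regular_scaling[OF g s this T_nonneg T_anti T_small]
  show ?thesis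
    using scale1 scale2 unfolding lambda1_upper_def lambda1_lower_def by simp
qed

end
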